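(* For the algorithm described in the context (under Assumptions (A1), (A2), (A3)), for each of the two step-size choices $\gamma_t(i)=\beta(t)$ and $\gamma_t(i)=\beta(n_t(i))$, almost surely for every state $i\in S$: $\sum_{t=0}^\infty q_{\mu_t}(i)\gamma_t(i)=\infty$ and $\sum_{t=0}^\infty q_{\mu_t}(i)^2\gamma_t(i)^2<\infty$.
   Context: Let $\alpha\in(0,1)$ and let $X$ be a Markov decision process with finite state space $S=\{1,\dots,n\}$, finite nonempty action sets $\mathcal A(i)$ ($i\in S$), transition probabilities $P_{ij}(u)$ ($u\in\mathcal A(i)$) and deterministic costs $c(i,u)\ge 0$. A policy is a map $\mu$ with $\mu(i)\in\mathcal A(i)$ for all $i$; it induces a Markov chain $X^\mu$ with transition probabilities $P_{ij}(\mu(i))$. A fixed probability distribution $p$ on $S$ is used as the initial distribution for all policies, and $q_\mu(i)$ denotes the probability that $X^\mu$ with $X^\mu_0\sim p$ ever visits $i$. Assumption (A1): $q_\mu(i)>0$ for every policy $\mu$ and every $i\in S$ (hence, as there are finitely many policies, $q_\mu(i)\ge\delta$ for some $\delta>0$). Assumption (A2): for all $i,j\in S$ and $u,v\in\mathcal A(i)$, $P_{ij}(u)>0$ iff $P_{ij}(v)>0$. The reachability graph is $G=(S,E)$ with $E=\{(i,j):P_{ij}(u)>0\text{ for some }u\}$; $\mathcal T$ denotes its set of transient states. Assumption (A3): the subgraph of $G$ induced by $\mathcal T$ is acyclic. Algorithm: set $J_0=0$. At iteration $t=0,1,2,\dots$: choose a greedy policy $\mu_t$ with respect to $J_t$,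 i.e. $\mu_t(i)\in\arg\min_{u\in\mathcal A(i)}[c(i,u)+\alpha\sum_jP_{ij}(u)J_t(j)]$; independently of the past, draw $X_0^{\mu_t}\sim p$ and simulate a trajectory $(X^{\mu_t}_k)_{k\ge0}$ under $\mu_t$. Let $N_t(i)=\inf\{k: X^{\mu_t}_k=i\}$ and, when $N_t(i)<\infty$, $\tilde J^{\mu_t}(i)=\sum_{k\ge N_t(i)}\alpha^{k-N_t(i)}c(X^{\mu_t}_k,\mu_t(X^{\mu_t}_k))$. Then $J_{t+1}(i)=(1-\gamma_t(i))J_t(i)+\gamma_t(i)\tilde J^{\mu_t}(i)$ if $N_t(i)<\infty$, and $J_{t+1}(i)=J_t(i)$ otherwise. Step sizes: $\beta:\mathbb N\to(0,1]$ deterministic with $\sum_t\beta(t)=\infty$, $\sum_t\beta(t)^2<\infty$, and $\beta$ nonincreasing for $t>T_0$ for some constant $T_0$. $n_t(i)=\sum_{\tau<t}\mathbf 1\{\text{trajectory at iteration }\tau\text{ visits }i\}$ is the number of iterations before $t$ whose trajectory visited $i$. *)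

theory Defs
  imports "HOL-Probability.Probability"
begin

text \<open>Randomness of one iteration: an initial state drawn from p, and for every
  time step k and every state-action pair (s,u) an independent next state drawn
  from P s u (random-mapping representation of the controlled chain).\<close>

definition iter_space :: "'s pmf \<Rightarrow> ('s \<Rightarrow> 'a \<Rightarrow> 's pmf) \<Rightarrow> ('s \<times> (nat \<Rightarrow> 's \<times> 'a \<Rightarrow> 's)) measure" where
  "iter_space p P = measure_pmf p \<Otimes>\<^sub>M
     (\<Pi>\<^sub>M k\<in>(UNIV::nat set). \<Pi>\<^sub>M su\<in>UNIV. measure_pmf (P (fst su) (snd su)))"

definition Omega :: "'s pmf \<Rightarrow> ('s \<Rightarrow> 'a \<Rightarrow> 's pmf) \<Rightarrow> (nat \<Rightarrow> 's \<times> (nat \<Rightarrow> 's \<times> 'a \<Rightarrow> 's)) measure" where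
  "Omega p P = (\<Pi>\<^sub>M t\<in>(UNIV::nat set). iter_space p P)"

primrec traj :: "('s \<Rightarrow> 'a) \<Rightarrow> ('s \<times> (nat \<Rightarrow> 's \<times> 'a \<Rightarrow> 's)) \<Rightarrow> nat \<Rightarrow> 's" where
  "traj mu w 0 = fst w"
| "traj mu w (Suc k) = snd w k (traj mu w k, mu (traj mu w k))"

definition policy :: "('s \<Rightarrow> 'a set) \<Rightarrow> ('s \<Rightarrow> 'a) \<Rightarrow> bool" where
  "policy A mu \<longleftrightarrow> (\<forall>s. mu s \<in> A s)"

definition visit_prob :: "'s pmf \<Rightarrow> ('s \<Rightarrow> 'a \<Rightarrow> 's pmf) \<Rightarrow> ('s \<Rightarrow> 'a) \<Rightarrow> 's \<Rightarrow> real" where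
  "visit_prob p P mu i = measure (iter_space p P) {w \<in> space (iter_space p P). \<exists>k. traj mu w k = i}"

definition Qval :: "('s \<Rightarrow> 'a \<Rightarrow> real) \<Rightarrow> real \<Rightarrow> ('s \<Rightarrow> 'a \<Rightarrow> 's::finite pmf) \<Rightarrow> ('s \<Rightarrow> real) \<Rightarrow> 's \<Rightarrow> 'a \<Rightarrow> real" where
  "Qval c \<alpha> P J s u = c s u + \<alpha> * (\<Sum>j\<in>UNIV. pmf (P s u) j * J j)"

definition greedy_sel :: "('s \<Rightarrow> 'a set) \<Rightarrow> ('s \<Rightarrow> 'a \<Rightarrow> real) \<Rightarrow> real \<Rightarrow> ('s \<Rightarrow> 'a \<Rightarrow> 's::finite pmf)
    \<Rightarrow> (('s \<Rightarrow> real) \<Rightarrow> 's \<Rightarrow> 'a) \<Rightarrow> bool" where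
  "greedy_sel A c \<alpha> P sel \<longleftrightarrow>
     (\<forall>J s. sel J s \<in> A s \<and> (\<forall>u\<in>A s. Qval c \<alpha> P J s (sel J s) \<le> Qval c \<alpha> P J s u))"

definition reach_edges :: "('s \<Rightarrow> 'a set) \<Rightarrow> ('s \<Rightarrow> 'a \<Rightarrow> 's pmf) \<Rightarrow> ('s \<times> 's) set" where
  "reach_edges A P = {(i, j). \<exists>u\<in>A i. pmf (P i u) j > 0}"

definition transient_states :: "('s \<Rightarrow> 'a set) \<Rightarrow> ('s \<Rightarrow> 'a \<Rightarrow> 's pmf) \<Rightarrow> 's set" where
  "transient_states A P = {i. \<exists>j. (i, j) \<in> (reach_edges A P)\<^sup>* \<and> (j, i) \<notin> (reach_edges A P)\<^sup>*}"

definition first_visit :: "(nat \<Rightarrow> 's) \<Rightarrow> 's \<Rightarrow> nat" where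
  "first_visit x i = (LEAST k. x k = i)"

definition tail_cost :: "('s \<Rightarrow> 'a \<Rightarrow> real) \<Rightarrow> real \<Rightarrow> ('s \<Rightarrow> 'a) \<Rightarrow> (nat \<Rightarrow> 's) \<Rightarrow> nat \<Rightarrow> real" where
  "tail_cost c \<alpha> mu x N = (\<Sum>m. \<alpha> ^ m * c (x (N + m)) (mu (x (N + m))))"

text \<open>State of the algorithm before iteration t: (J_t, n_t). The step size used at
  iteration t for state i is step t (n_t i).\<close>
primrec alg :: "('s \<Rightarrow> 'a \<Rightarrow> real) \<Rightarrow> real \<Rightarrow> (('s \<Rightarrow> real) \<Rightarrow> 's \<Rightarrow> 'a) \<Rightarrow> (nat \<Rightarrow> nat \<Rightarrow> real)
    \<Rightarrow> (nat \<Rightarrow> 's \<times> (nat \<Rightarrow> 's \<times> 'a \<Rightarrow> 's)) \<Rightarrow> nat \<Rightarrow> ('s \<Rightarrow> real) \<times> ('s \<Rightarrow> nat)" where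
  "alg c \<alpha> sel step \<omega> 0 = (\<lambda>_. 0, \<lambda>_. 0)"
| "alg c \<alpha> sel step \<omega> (Suc t) =
     (let J = fst (alg c \<alpha> sel step \<omega> t); n = snd (alg c \<alpha> sel step \<omega> t);
          mu = sel J; x = traj mu (\<omega> t)
      in (\<lambda>i. if \<exists>k. x k = i
               then (1 - step t (n i)) * J i + step t (n i) * tail_cost c \<alpha> mu x (first_visit x i)
               else J i,
          \<lambda>i. if \<exists>k. x k = i then Suc (n i) else n i))"

end

theory Submission
  imports Defs
begin

text \<open>The visit probabilities \<open>q\<^sub>\<mu>(i)\<close> of the finitely many policies lie in \<open>[\<delta>, 1]\<close>, so both
  series behave like \<open>\<Sum> \<gamma>\<^sub>t(i)\<close> and \<open>\<Sum> \<gamma>\<^sub>t(i)\<^sup>2\<close>; for \<open>\<gamma>\<^sub>t(i) = \<beta>(t)\<close> nothing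
  more is needed. For \<open>\<gamma>\<^sub>t(i) = \<beta>(n\<^sub>t(i))\<close>, the counter \<open>n\<^sub>t(i)\<close> grows by at most one per
  iteration, so \<open>\<Sum>\<^sub>t \<beta>(n\<^sub>t(i)) \<ge> \<Sum>\<^sub>m \<beta>(m) = \<infinity>\<close>. For the squares, (A1) makes \<open>i\<close>
  reachable and (A2) turns a path to \<open>i\<close> into a set \<open>W\<close> of positive probability of
  iteration randomness on which every policy visits \<open>i\<close>; hence \<open>n\<^sub>t(i)\<close> dominates the
  number of earlier iterations whose randomness fell in \<open>W\<close>, and for i.i.d. iterations
  the expectation of \<open>\<Sum>\<^sub>t \<beta>(that count)\<^sup>2\<close> is at most \<open>\<Sum> \<beta>\<^sup>2 / P(W)\<close>.\<close>

lemma nn_integral_PiM_mult_indicator_component: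
  fixes M :: "'x measure"
  assumes M: "prob_space M"
    and g: "g \<in> borel_measurable (PiM UNIV (\<lambda>_::nat. M))"
    and g_indep: "\<And>w y. g (w(t := y)) = g w"
    and W: "W \<in> sets M"
  shows "(\<integral>\<^sup>+w. g w * indicator W (w t) \<partial>PiM UNIV (\<lambda>_. M))
       = (\<integral>\<^sup>+w. g w \<partial>PiM UNIV (\<lambda>_. M)) * emeasure M W"
proof -
  let ?O = "PiM UNIV (\<lambda>_::nat. M)"
  interpret M: prob_space M by (rule M)
  interpret pair_sigma_finite M ?O
    by (intro pair_sigma_finite.intro M.sigma_finite_measure_axioms
        prob_space_imp_sigma_finite prob_space_PiM M)
  let ?ins = "\<lambda>(x, X). X(t := x)"
  have ins_meas: "?ins \<in> measurable (M \<Otimes>\<^sub>M ?O) ?O"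
  proof -
    have "(\<lambda>z i. if i = t then fst z else snd z i) \<in> measurable (M \<Otimes>\<^sub>M ?O) ?O"
      by (rule measurable_PiM_single') (auto simp: space_pair_measure space_PiM)
    moreover have "(\<lambda>z i. if i = t then fst z else snd z i) = ?ins"
      by (auto simp: fun_eq_iff)
    ultimately show ?thesis by metis
  qed
  have "(\<integral>\<^sup>+w. g w * indicator W (w t) \<partial>?O)
      = (\<integral>\<^sup>+w. g w * indicator W (w t) \<partial>distr (M \<Otimes>\<^sub>M ?O) ?O ?ins)"
    using distr_pair_PiM_eq_PiM[of UNIV "\<lambda>_. M" t] M by simp
  also have "\<dots> = (\<integral>\<^sup>+z. g ((snd z)(t := fst z)) * indicator W (fst z) \<partial>(M \<Otimes>\<^sub>M ?O))"
    by (subst nn_integral_distr[OF ins_meas]) (use g W in \<open>auto simp: split_beta'\<close>)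
  also have "\<dots> = (\<integral>\<^sup>+X. \<integral>\<^sup>+x. g X * indicator W x \<partial>M \<partial>?O)"
    by (simp add: g_indep, subst nn_integral_snd[symmetric]) (use g W in auto)
  also have "\<dots> = (\<integral>\<^sup>+X. g X * emeasure M W \<partial>?O)"
    by (intro nn_integral_cong) (use W in \<open>simp add: nn_integral_cmult\<close>)
  also have "\<dots> = (\<integral>\<^sup>+w. g w \<partial>?O) * emeasure M W"
    by (rule nn_integral_multc) (use g in auto)
  finally show ?thesis .
qed

definition hit_count :: "'x set \<Rightarrow> (nat \<Rightarrow> 'x) \<Rightarrow> nat \<Rightarrow> nat" where
  "hit_count W w t = (\<Sum>s<t. of_bool (w s \<in> W))"

lemma hit_count_0 [simp]: "hit_count W w 0 = 0"
  by (simp add: hit_count_def)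

lemma hit_count_Suc: "hit_count W w (Suc t) = hit_count W w t + of_bool (w t \<in> W)"
  by (simp add: hit_count_def)

lemma hit_count_fun_upd [simp]: "hit_count W (w(t := y)) t = hit_count W w t"
  unfolding hit_count_def by (intro sum.cong) auto

lemma measurable_hit_count:
  assumes W: "W \<in> sets M"
  shows "(\<lambda>w. hit_count W w t) \<in> measurable (PiM UNIV (\<lambda>_::nat. M)) (count_space UNIV)"
proof (induction t)
  case (Suc t)
  have hit: "{w \<in> space (PiM UNIV (\<lambda>_::nat. M)). w t \<in> W} \<in> sets (PiM UNIV (\<lambda>_::nat. M))"
    using W by (intro sets_Collect_single) auto
  have step_meas: "(\<lambda>w. n + of_bool (w t \<in> W))
      \<in> measurable (PiM UNIV (\<lambda>_::nat. M)) (count_space UNIV)" for n :: nat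
  proof -
    have "(\<lambda>w. if w t \<in> W then n + 1 else n)
        \<in> measurable (PiM UNIV (\<lambda>_::nat. M)) (count_space UNIV)"
      by (rule measurable_If[where P="\<lambda>w. w t \<in> W", OF measurable_const measurable_const hit]) auto
    moreover have "(\<lambda>w. if w t \<in> W then n + 1 else n) = (\<lambda>w. n + of_bool (w t \<in> W))"
      by auto
    ultimately show ?thesis by simp
  qed
  have "(\<lambda>w. (\<lambda>n w. n + of_bool (w t \<in> W)) (hit_count W w t) w)
      \<in> measurable (PiM UNIV (\<lambda>_::nat. M)) (count_space UNIV)"
    by (rule measurable_compose_countable'[OF step_meas Suc]) simp
  then show ?case by (simp add: hit_count_Suc)
qed simp

lemma sum_indicator_hit_count:
  fixes f :: "nat \<Rightarrow> 'b::semiring_1"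
  shows "(\<Sum>t<T. f (hit_count W w t) * indicator W (w t)) = (\<Sum>m<hit_count W w T. f m)"
  by (induction T) (simp_all add: hit_count_Suc indicator_def)

text \<open>Since \<open>w t\<close> is independent of \<open>hit_count W w t\<close>, weighting the \<open>t\<close>-th term by the
  indicator of \<open>w t \<in> W\<close> costs exactly the factor \<open>emeasure M W\<close> in expectation, and the weighted
  series is pointwise bounded by \<open>\<Sum>m. f m\<close>, each \<open>f m\<close> being used at most once.\<close>

lemma nn_integral_suminf_hit_count_le:
  fixes M :: "'x measure" and f :: "nat \<Rightarrow> ennreal"
  assumes M: "prob_space M" and W: "W \<in> sets M"
  shows "(\<integral>\<^sup>+w. (\<Sum>t. f (hit_count W w t)) \<partial>PiM UNIV (\<lambda>_::nat. M)) * emeasure M W \<le> (\<Sum>m. f m)"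
proof -
  let ?O = "PiM UNIV (\<lambda>_::nat. M)"
  interpret O: prob_space ?O by (rule prob_space_PiM) (use M in auto)
  have f_meas: "(\<lambda>w. f (hit_count W w t)) \<in> borel_measurable ?O" for t
    using measurable_hit_count[OF W] by measurable
  have ind_meas: "(\<lambda>w. indicator W (w t) :: ennreal) \<in> borel_measurable ?O" for t
    using W by (intro borel_measurable_indicator' sets_Collect_single) auto
  have "(\<integral>\<^sup>+w. (\<Sum>t. f (hit_count W w t)) \<partial>?O) * emeasure M W
      = (\<Sum>t. (\<integral>\<^sup>+w. f (hit_count W w t) \<partial>?O) * emeasure M W)"
    by (simp add: nn_integral_suminf f_meas ennreal_suminf_multc)
  also have "\<dots> = (\<Sum>t. \<integral>\<^sup>+w. f (hit_count W w t) * indicator W (w t) \<partial>?O)"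
    by (simp add: nn_integral_PiM_mult_indicator_component[OF M f_meas _ W])
  also have "\<dots> = (\<integral>\<^sup>+w. (\<Sum>t. f (hit_count W w t) * indicator W (w t)) \<partial>?O)"
    by (intro nn_integral_suminf[symmetric] borel_measurable_times_ennreal f_meas ind_meas)
  also have "\<dots> \<le> (\<integral>\<^sup>+w. (\<Sum>m. f m) \<partial>?O)"
    by (intro nn_integral_mono suminf_le_const summableI)
       (simp add: sum_indicator_hit_count sum_le_suminf)
  also have "\<dots> = (\<Sum>m. f m)"
    by (simp add: O.emeasure_space_1)
  finally show ?thesis .
qed

lemma AE_summable_comp_hit_count:
  fixes M :: "'x measure" and f :: "nat \<Rightarrow> real"
  assumes M: "prob_space M" and W: "W \<in> sets M" and W_pos: "emeasure M W > 0"
    and f_nonneg: "\<And>m. 0 \<le> f m" and f_summable: "summable f"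
  shows "AE w in PiM UNIV (\<lambda>_::nat. M). summable (\<lambda>t. f (hit_count W w t))"
proof -
  let ?O = "PiM UNIV (\<lambda>_::nat. M)"
  let ?S = "\<lambda>w. \<Sum>t. ennreal (f (hit_count W w t))"
  have "(\<integral>\<^sup>+w. ?S w \<partial>?O) * emeasure M W \<le> ennreal (suminf f)"
    using nn_integral_suminf_hit_count_le[OF M W, of "\<lambda>m. ennreal (f m)"]
    by (simp add: suminf_ennreal2[OF f_nonneg f_summable])
  then have "(\<integral>\<^sup>+w. ?S w \<partial>?O) \<noteq> \<infinity>"
    using W_pos by (auto simp: ennreal_mult_eq_top_iff top_unique)
  then have "AE w in ?O. ?S w \<noteq> \<infinity>"
    using measurable_hit_count[OF W] by (intro nn_integral_PInf_AE) measurable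
  then show ?thesis
    by (rule eventually_mono) (auto intro: summable_suminf_not_top f_nonneg)
qed

lemma filterlim_at_top_of_tendsto_zero_comp:
  fixes b :: "nat \<Rightarrow> real" and g :: "nat \<Rightarrow> nat"
  assumes b_pos: "\<And>m. 0 < b m" and lim: "(\<lambda>t. b (g t)) \<longlonglongrightarrow> 0"
  shows "filterlim g at_top sequentially"
  unfolding filterlim_at_top
proof
  fix M
  define c where "c = Min (insert 1 (b ` {..<M}))"
  have c_le: "m < M \<Longrightarrow> c \<le> b m" for m
    unfolding c_def by (intro Min_le) auto
  have "0 < c"
    using b_pos by (auto simp: c_def Min_gr_iff)
  with lim have "\<forall>\<^sub>F t in sequentially. dist (b (g t)) 0 < c"
    by (rule tendstoD)
  then show "\<forall>\<^sub>F t in sequentially. M \<le> g t"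
    by (rule eventually_mono) (use c_le in \<open>force simp: dist_real_def not_le[symmetric]\<close>)
qed

lemma sum_lessThan_le_sum_comp_counter:
  fixes b :: "nat \<Rightarrow> real"
  assumes b_nonneg: "\<And>m. 0 \<le> b m" and g_0: "g 0 = 0"
    and g_Suc: "\<And>t. g (Suc t) = g t \<or> g (Suc t) = Suc (g t)"
  shows "(\<Sum>m<g T. b m) \<le> (\<Sum>t<T. b (g t))"
proof (induction T)
  case (Suc T)
  then show ?case
    using g_Suc[of T] b_nonneg[of "g T"] by auto
qed (simp add: g_0)

lemma not_summable_comp_counter:
  fixes b :: "nat \<Rightarrow> real"
  assumes b_pos: "\<And>m. 0 < b m" and b_not_summable: "\<not> summable b"
    and g_0: "g 0 = 0" and g_Suc: "\<And>t. g (Suc t) = g t \<or> g (Suc t) = Suc (g t)"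
  shows "\<not> summable (\<lambda>t. b (g t))"
proof
  assume bg_summable: "summable (\<lambda>t. b (g t))"
  have b_nonneg: "\<And>m. 0 \<le> b m"
    using b_pos less_imp_le by blast
  have "summable b"
  proof (rule summableI_nonneg_bounded[OF b_nonneg])
    fix M
    have "filterlim g at_top sequentially"
      by (rule filterlim_at_top_of_tendsto_zero_comp[of b g, OF b_pos summable_LIMSEQ_zero[OF bg_summable]])
    then obtain T where "M \<le> g T"
      by (auto simp: filterlim_at_top eventually_sequentially)
    then have "(\<Sum>m<M. b m) \<le> (\<Sum>m<g T. b m)"
      using b_nonneg by (intro sum_mono2) auto
    also have "\<dots> \<le> (\<Sum>t<T. b (g t))"
      by (rule sum_lessThan_le_sum_comp_counter[of b g, OF b_nonneg g_0 g_Suc])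
    also have "\<dots> \<le> (\<Sum>t. b (g t))"
      by (rule sum_le_suminf[OF bg_summable]) (use b_nonneg in auto)
    finally show "(\<Sum>m<M. b m) \<le> (\<Sum>t. b (g t))" .
  qed
  with b_not_summable show False ..
qed

lemma not_summable_mult_bounded_below:
  fixes x q :: "nat \<Rightarrow> real"
  assumes x_nonneg: "\<And>t. 0 \<le> x t" and x_not_summable: "\<not> summable x"
    and d: "0 < d" "\<And>t. d \<le> q t"
  shows "\<not> summable (\<lambda>t. q t * x t)"
proof
  assume "summable (\<lambda>t. q t * x t)"
  moreover have "norm (d * x t) \<le> q t * x t" for t
    using d x_nonneg[of t] by (simp add: mult_right_mono)
  ultimately have "summable (\<lambda>t. d * x t)"
    by (rule summable_comparison_test'[where N=0])
  with d x_not_summable show False by simp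
qed

lemma summable_power2_mult_bounded:
  fixes q x y :: "nat \<Rightarrow> real"
  assumes q: "\<And>t. 0 \<le> q t" "\<And>t. q t \<le> 1"
    and x: "\<forall>\<^sub>F t in sequentially. 0 \<le> x t \<and> x t \<le> y t"
    and y: "summable (\<lambda>t. (y t)\<^sup>2)"
  shows "summable (\<lambda>t. (q t * x t)\<^sup>2)"
proof (rule summable_comparison_test_ev[OF _ y])
  show "\<forall>\<^sub>F t in sequentially. norm ((q t * x t)\<^sup>2) \<le> (y t)\<^sup>2"
    using x
  proof (rule eventually_mono)
    fix t assume "0 \<le> x t \<and> x t \<le> y t"
    moreover have "q t * x t \<le> x t" if "0 \<le> x t"
      using q[of t] that by (simp add: mult_left_le_one_le)
    ultimately show "norm ((q t * x t)\<^sup>2) \<le> (y t)\<^sup>2"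
      using q(1)[of t] by (simp add: power_mono)
  qed
qed

text \<open>Here \<open>n\<close> plays the visit counter \<open>n\<^sub>t(i)\<close> and \<open>k\<close> a smaller counter whose square
  series is known to converge; the step size \<open>\<beta>(t)\<close> is the case \<open>n = k = id\<close>.\<close>

lemma step_size_conditions:
  fixes \<beta> q :: "nat \<Rightarrow> real" and n k :: "nat \<Rightarrow> nat"
  assumes q: "0 < d" "\<And>t. d \<le> q t" "\<And>t. q t \<le> 1"
    and \<beta>_pos: "\<And>m. 0 < \<beta> m" and \<beta>_not_summable: "\<not> summable \<beta>"
    and \<beta>_antimono: "\<And>m m'. T0 < m \<Longrightarrow> m \<le> m' \<Longrightarrow> \<beta> m' \<le> \<beta> m"
    and n_0: "n 0 = 0" and n_Suc: "\<And>t. n (Suc t) = n t \<or> n (Suc t) = Suc (n t)"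
    and k_le_n: "\<And>t. k t \<le> n t" and k_summable: "summable (\<lambda>t. (\<beta> (k t))\<^sup>2)"
  shows "\<not> summable (\<lambda>t. q t * \<beta> (n t)) \<and> summable (\<lambda>t. (q t * \<beta> (n t))\<^sup>2)"
proof
  have \<beta>_nonneg: "\<And>m. 0 \<le> \<beta> m"
    using \<beta>_pos less_imp_le by blast
  show "\<not> summable (\<lambda>t. q t * \<beta> (n t))"
    by (rule not_summable_mult_bounded_below[OF \<beta>_nonneg not_summable_comp_counter q(1,2)])
       (fact \<beta>_pos \<beta>_not_summable n_0 n_Suc)+
  have "filterlim k at_top sequentially"
    by (rule filterlim_at_top_of_tendsto_zero_comp[of "\<lambda>m. (\<beta> m)\<^sup>2" k, OF _ summable_LIMSEQ_zero[OF k_summable]])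
       (intro zero_less_power \<beta>_pos)
  then have "\<forall>\<^sub>F t in sequentially. Suc T0 \<le> k t"
    by (simp add: filterlim_at_top)
  then have "\<forall>\<^sub>F t in sequentially. 0 \<le> \<beta> (n t) \<and> \<beta> (n t) \<le> \<beta> (k t)"
    by (rule eventually_mono) (use \<beta>_nonneg \<beta>_antimono k_le_n in auto)
  then show "summable (\<lambda>t. (q t * \<beta> (n t))\<^sup>2)"
    using q by (intro summable_power2_mult_bounded[OF _ _ _ k_summable]) (auto intro: order_trans[of 0 d])
qed

lemma AE_pair_measure_fstI:
  assumes "prob_space N" and "AE x in M. Q x"
  shows "AE z in M \<Otimes>\<^sub>M N. Q (fst z)"
proof -
  interpret N: prob_space N by fact
  show ?thesis
    by (rule AE_distrD[OF measurable_fst]) (subst N.distr_pair_fst, rule assms(2))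
qed

lemma AE_pair_measure_sndI:
  assumes "prob_space M" "prob_space N" and "AE y in N. Q y"
  shows "AE z in M \<Otimes>\<^sub>M N. Q (snd z)"
proof -
  interpret M: prob_space M by fact
  interpret N: prob_space N by fact
  interpret pair_sigma_finite M N ..
  from assms(3) obtain S where S: "S \<in> null_sets N" "{y \<in> space N. \<not> Q y} \<subseteq> S"
    by (auto elim: AE_E3 simp: eventually_ae_filter)
  have "emeasure (M \<Otimes>\<^sub>M N) (space M \<times> S) = emeasure M (space M) * emeasure N S"
    using S by (intro N.emeasure_pair_measure_Times) auto
  then have "space M \<times> S \<in> null_sets (M \<Otimes>\<^sub>M N)"
    using S by (auto simp: null_sets_def)
  then show ?thesis
    by (rule AE_I') (use S in \<open>auto simp: space_pair_measure\<close>)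
qed

definition transition_space :: "('s \<Rightarrow> 'a \<Rightarrow> 's pmf) \<Rightarrow> ('s \<times> 'a \<Rightarrow> 's) measure" where
  "transition_space P = (\<Pi>\<^sub>M su\<in>UNIV. measure_pmf (P (fst su) (snd su)))"

lemma prob_space_transition_space: "prob_space (transition_space P)"
  unfolding transition_space_def by (intro prob_space_PiM prob_space_measure_pmf)

lemma iter_space_eq: "iter_space p P = measure_pmf p \<Otimes>\<^sub>M (\<Pi>\<^sub>M k\<in>(UNIV::nat set). transition_space P)"
  by (simp add: iter_space_def transition_space_def)

lemma prob_space_iter_space: "prob_space (iter_space p P)"
  unfolding iter_space_eq
  by (intro prob_space_pair prob_space_PiM prob_space_transition_space prob_space_measure_pmf)

inductive reachable :: "'s pmf \<Rightarrow> ('s \<Rightarrow> 'a set) \<Rightarrow> ('s \<Rightarrow> 'a \<Rightarrow> 's pmf) \<Rightarrow> 's \<Rightarrow> bool"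
  for p A P where
  initial: "s \<in> set_pmf p \<Longrightarrow> reachable p A P s"
| step: "reachable p A P s \<Longrightarrow> u \<in> A s \<Longrightarrow> s' \<in> set_pmf (P s u) \<Longrightarrow> reachable p A P s'"

lemma AE_traj_reachable:
  fixes mu :: "'s::countable \<Rightarrow> 'a"
  assumes mu: "policy A mu"
  shows "AE w in iter_space p P. \<forall>k. reachable p A P (traj mu w k)"
proof -
  let ?N = "\<Pi>\<^sub>M k\<in>(UNIV::nat set). transition_space P"
  have N: "prob_space ?N"
    by (intro prob_space_PiM prob_space_transition_space)
  have initial: "AE w in iter_space p P. fst w \<in> set_pmf p"
    unfolding iter_space_eq by (rule AE_pair_measure_fstI[OF N AE_measure_pmf])
  have "AE x in ?N. x k (s, mu s) \<in> set_pmf (P s (mu s))" for k s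
    unfolding transition_space_def
    by (intro AE_PiM_component[of UNIV _ k] AE_PiM_component[of UNIV _ "(s, mu s)"])
       (auto intro: prob_space_PiM prob_space_measure_pmf simp: AE_measure_pmf_iff)
  then have "AE x in ?N. \<forall>k s. x k (s, mu s) \<in> set_pmf (P s (mu s))"
    by (simp add: AE_all_countable)
  then have transitions: "AE w in iter_space p P. \<forall>k s. snd w k (s, mu s) \<in> set_pmf (P s (mu s))"
    unfolding iter_space_eq by (rule AE_pair_measure_sndI[OF prob_space_measure_pmf N])
  from initial transitions show ?thesis
  proof eventually_elim
    case (elim w)
    show ?case
    proof
      fix k show "reachable p A P (traj mu w k)"
        by (induction k) (use elim mu in \<open>auto simp: policy_def intro: reachable.intros\<close>)
    qed
  qed
qed

lemma reachable_if_visit_prob_pos: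
  fixes mu :: "'s::countable \<Rightarrow> 'a"
  assumes mu: "policy A mu" and pos: "visit_prob p P mu i > 0"
  shows "reachable p A P i"
proof (rule ccontr)
  assume unreachable: "\<not> reachable p A P i"
  let ?M = "iter_space p P"
  let ?V = "{w \<in> space ?M. \<exists>k. traj mu w k = i}"
  have "AE w in ?M. \<not> (\<exists>k. traj mu w k = i)"
    using AE_traj_reachable[OF mu] by eventually_elim (use unreachable in auto)
  then have "visit_prob p P mu i = 0"
    unfolding visit_prob_def
    by (cases "?V \<in> sets ?M") (auto simp: AE_iff_measurable measure_def emeasure_notin_sets)
  with pos show False by simp
qed

lemma transition_space_set_forcing_successor:
  assumes V: "finite V" and succ: "\<And>v. v \<in> V \<Longrightarrow> s' \<in> set_pmf (P s v)"
  shows "\<exists>C \<in> sets (transition_space P). emeasure (transition_space P) C > 0 \<and>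
    (\<forall>y\<in>C. \<forall>v\<in>V. y (s, v) = s')"
proof -
  let ?J = "Pair s ` V"
  define C where "C = prod_emb UNIV (\<lambda>su. measure_pmf (P (fst su) (snd su))) ?J (\<Pi>\<^sub>E su\<in>?J. {s'})"
  have C_sets: "C \<in> sets (transition_space P)"
    unfolding C_def transition_space_def by (rule sets_PiM_I) (use V in auto)
  have "emeasure (transition_space P) C = (\<Prod>v\<in>V. emeasure (measure_pmf (P s v)) {s'})"
    unfolding C_def transition_space_def
    by (subst emeasure_PiM_emb) (use V in \<open>auto intro: prob_space_measure_pmf simp: prod.reindex inj_on_def\<close>)
  also have "\<dots> > 0"
    using V succ by (simp add: zero_less_iff_neq_zero prod_zero_iff emeasure_pmf_single set_pmf_iff)
  finally have C_pos: "emeasure (transition_space P) C > 0" .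
  have "y (s, v) = s'" if "y \<in> C" "v \<in> V" for y v
    using that unfolding C_def prod_emb_def by (auto simp: PiE_iff dest!: fun_cong[where x="(s, v)"])
  with C_sets C_pos show ?thesis by blast
qed

lemma reachable_imp_forcing_cylinder:
  fixes A :: "'s \<Rightarrow> 'a set"
  assumes finite: "\<And>s. finite (A s)"
    and A2: "\<forall>i j. \<forall>u\<in>A i. \<forall>v\<in>A i. pmf (P i u) j > 0 \<longleftrightarrow> pmf (P i v) j > 0"
    and "reachable p A P i"
  shows "\<exists>k s0 B. s0 \<in> set_pmf p \<and>
    (\<forall>j<k. B j \<in> sets (transition_space P) \<and> emeasure (transition_space P) (B j) > 0) \<and>
    (\<forall>mu w. policy A mu \<longrightarrow> fst w = s0 \<longrightarrow> (\<forall>j<k. snd w j \<in> B j) \<longrightarrow> traj mu w k = i)"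
  using \<open>reachable p A P i\<close>
proof induction
  case (initial s)
  then show ?case by (intro exI[of _ 0] exI[of _ s]) auto
next
  case (step s u s')
  from step.IH obtain k s0 B where s0: "s0 \<in> set_pmf p"
    and B: "\<forall>j<k. B j \<in> sets (transition_space P) \<and> emeasure (transition_space P) (B j) > 0"
    and traj_k: "\<forall>mu w. policy A mu \<longrightarrow> fst w = s0 \<longrightarrow> (\<forall>j<k. snd w j \<in> B j) \<longrightarrow> traj mu w k = s"
    by blast
  have "pmf (P s v) s' > 0" if "v \<in> A s" for v
    using A2 step.hyps that by (metis pmf_positive)
  then obtain C where C: "C \<in> sets (transition_space P)" "emeasure (transition_space P) C > 0"
    and C_forces: "\<forall>y\<in>C. \<forall>v\<in>A s. y (s, v) = s'"
    using transition_space_set_forcing_successor[OF finite] by (metis set_pmf_iff less_irrefl)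
  show ?case
  proof (intro exI[of _ "Suc k"] exI[of _ s0] exI[of _ "B(k := C)"] conjI allI impI)
    fix mu w assume mu: "policy A mu" and "fst w = s0" and w: "\<forall>j<Suc k. snd w j \<in> (B(k := C)) j"
    then have "traj mu w k = s"
      using traj_k by (metis fun_upd_other less_Suc_eq less_not_refl)
    then show "traj mu w (Suc k) = s'"
      using C_forces w mu by (auto simp: policy_def)
  qed (use s0 B C in \<open>auto simp: less_Suc_eq\<close>)
qed

lemma exists_positive_set_forcing_visit:
  fixes A :: "'s \<Rightarrow> 'a set"
  assumes finite: "\<And>s. finite (A s)"
    and A2: "\<forall>i j. \<forall>u\<in>A i. \<forall>v\<in>A i. pmf (P i u) j > 0 \<longleftrightarrow> pmf (P i v) j > 0"
    and reach: "reachable p A P i"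
  shows "\<exists>W \<in> sets (iter_space p P). emeasure (iter_space p P) W > 0 \<and>
    (\<forall>mu. policy A mu \<longrightarrow> (\<forall>w\<in>W. \<exists>k. traj mu w k = i))"
proof -
  let ?N = "\<Pi>\<^sub>M k\<in>(UNIV::nat set). transition_space P"
  obtain k s0 B where s0: "s0 \<in> set_pmf p"
    and B: "\<forall>j<k. B j \<in> sets (transition_space P) \<and> emeasure (transition_space P) (B j) > 0"
    and traj_k: "\<forall>mu w. policy A mu \<longrightarrow> fst w = s0 \<longrightarrow> (\<forall>j<k. snd w j \<in> B j) \<longrightarrow> traj mu w k = i"
    using reachable_imp_forcing_cylinder[OF finite A2 reach] by blast
  define E where "E = prod_emb UNIV (\<lambda>_. transition_space P) {..<k} (\<Pi>\<^sub>E j\<in>{..<k}. B j)"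
  interpret N: prob_space ?N
    by (intro prob_space_PiM prob_space_transition_space)
  have E: "E \<in> sets ?N"
    unfolding E_def by (rule sets_PiM_I) (use B in auto)
  then have "{s0} \<times> E \<in> sets (iter_space p P)"
    unfolding iter_space_eq by (intro pair_measureI) auto
  moreover have "emeasure ?N E = (\<Prod>j<k. emeasure (transition_space P) (B j))"
    unfolding E_def by (rule emeasure_PiM_emb) (use B in \<open>auto intro: prob_space_transition_space\<close>)
  then have "emeasure (iter_space p P) ({s0} \<times> E) = pmf p s0 * (\<Prod>j<k. emeasure (transition_space P) (B j))"
    unfolding iter_space_eq using E by (simp add: N.emeasure_pair_measure_Times emeasure_pmf_single)
  moreover have "pmf p s0 * (\<Prod>j<k. emeasure (transition_space P) (B j)) > 0"
    using s0 B by (auto simp: zero_less_iff_neq_zero prod_zero_iff pmf_positive set_pmf_iff)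
  moreover have "\<forall>mu. policy A mu \<longrightarrow> (\<forall>w\<in>{s0} \<times> E. \<exists>k. traj mu w k = i)"
    using traj_k unfolding E_def prod_emb_def by (auto simp: PiE_iff) (metis lessThan_iff)
  ultimately show ?thesis by metis
qed

lemma visit_prob_uniform_lower_bound:
  fixes A :: "'s::finite \<Rightarrow> 'a set"
  assumes finite: "\<And>s. finite (A s)"
    and A1: "\<forall>mu. policy A mu \<longrightarrow> (\<forall>i. visit_prob p P mu i > 0)"
  shows "\<exists>d>0. \<forall>mu. policy A mu \<longrightarrow> d \<le> visit_prob p P mu i"
proof -
  have "{mu. policy A mu} = PiE UNIV A"
    by (auto simp: policy_def PiE_iff)
  then have "finite {mu. policy A mu}"
    using finite by (simp add: finite_PiE)
  then show ?thesis
    using A1 by (intro exI[of _ "Min (insert 1 ((\<lambda>mu. visit_prob p P mu i) ` {mu. policy A mu}))"])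
      (auto simp: Min_gr_iff)
qed

lemma alg_visit_count_Suc:
  "snd (alg c \<alpha> sel step \<omega> (Suc t)) i
     = snd (alg c \<alpha> sel step \<omega> t) i + of_bool (\<exists>k. traj (sel (fst (alg c \<alpha> sel step \<omega> t))) (\<omega> t) k = i)"
  by (simp add: Let_def)

lemma AE_alg_visit_count_lower_bound:
  fixes A :: "'s \<Rightarrow> 'a set" and f :: "nat \<Rightarrow> real"
  assumes finite: "\<And>s. finite (A s)"
    and A2: "\<forall>i j. \<forall>u\<in>A i. \<forall>v\<in>A i. pmf (P i u) j > 0 \<longleftrightarrow> pmf (P i v) j > 0"
    and sel_policy: "\<And>J. policy A (sel J)" and reach: "reachable p A P i"
    and f_nonneg: "\<And>m. 0 \<le> f m" and f_summable: "summable f"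
  shows "AE \<omega> in Omega p P. \<exists>k. (\<forall>t. k t \<le> snd (alg c \<alpha> sel step \<omega> t) i) \<and> summable (\<lambda>t. f (k t))"
proof -
  obtain W where W: "W \<in> sets (iter_space p P)" "emeasure (iter_space p P) W > 0"
    and W_visit: "\<forall>mu. policy A mu \<longrightarrow> (\<forall>w\<in>W. \<exists>k. traj mu w k = i)"
    using exists_positive_set_forcing_visit[OF finite A2 reach] by blast
  have "hit_count W \<omega> t \<le> snd (alg c \<alpha> sel step \<omega> t) i" for \<omega> t
    by (induction t) (use W_visit sel_policy in \<open>auto simp del: alg.simps simp: hit_count_Suc alg_visit_count_Suc\<close>)
  moreover have "AE \<omega> in Omega p P. summable (\<lambda>t. f (hit_count W \<omega> t))"
    unfolding Omega_def by (rule AE_summable_comp_hit_count[OF prob_space_iter_space W f_nonneg f_summable])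
  ultimately show ?thesis
    by (auto elim!: eventually_mono)
qed

lemma alg_visit_count_Suc_cases:
  "snd (alg c \<alpha> sel step \<omega> (Suc t)) i = snd (alg c \<alpha> sel step \<omega> t) i
   \<or> snd (alg c \<alpha> sel step \<omega> (Suc t)) i = Suc (snd (alg c \<alpha> sel step \<omega> t) i)"
  by (simp add: Let_def)

lemma AE_step_size_conditions_at:
  fixes A :: "'s::finite \<Rightarrow> 'a set" and \<beta> :: "nat \<Rightarrow> real"
  assumes finite: "\<And>s. finite (A s)"
    and A1: "\<forall>mu. policy A mu \<longrightarrow> (\<forall>i. visit_prob p P mu i > 0)"
    and A2: "\<forall>i j. \<forall>u\<in>A i. \<forall>v\<in>A i. pmf (P i u) j > 0 \<longleftrightarrow> pmf (P i v) j > 0"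
    and sel_policy: "\<And>J. policy A (sel J)"
    and \<beta>_pos: "\<And>m. 0 < \<beta> m" and \<beta>_not_summable: "\<not> summable \<beta>"
    and \<beta>_summable_sq: "summable (\<lambda>m. (\<beta> m)\<^sup>2)"
    and \<beta>_antimono: "\<And>m m'. T0 < m \<Longrightarrow> m \<le> m' \<Longrightarrow> \<beta> m' \<le> \<beta> m"
    and step_choice: "step = (\<lambda>t n. \<beta> t) \<or> step = (\<lambda>t n. \<beta> n)"
  shows "AE \<omega> in Omega p P.
     \<not> summable (\<lambda>t. visit_prob p P (sel (fst (alg c \<alpha> sel step \<omega> t))) i
                        * step t (snd (alg c \<alpha> sel step \<omega> t) i))
   \<and> summable (\<lambda>t. (visit_prob p P (sel (fst (alg c \<alpha> sel step \<omega> t))) i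
                        * step t (snd (alg c \<alpha> sel step \<omega> t) i))\<^sup>2)"
proof -
  define q where "q \<omega> t = visit_prob p P (sel (fst (alg c \<alpha> sel step \<omega> t))) i" for \<omega> t
  define n where "n \<omega> t = snd (alg c \<alpha> sel step \<omega> t) i" for \<omega> t
  have n_counter: "n \<omega> 0 = 0" "n \<omega> (Suc t) = n \<omega> t \<or> n \<omega> (Suc t) = Suc (n \<omega> t)" for \<omega> t
    unfolding n_def by (simp, rule alg_visit_count_Suc_cases)
  obtain d where "0 < d" and "\<And>mu. policy A mu \<Longrightarrow> d \<le> visit_prob p P mu i"
    using visit_prob_uniform_lower_bound[OF finite A1] by blast
  moreover have "visit_prob p P mu i \<le> 1" for mu
    unfolding visit_prob_def by (rule prob_space.prob_le_1[OF prob_space_iter_space])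
  ultimately have conditions:
    "\<not> summable (\<lambda>t. q \<omega> t * \<beta> (n' t)) \<and> summable (\<lambda>t. (q \<omega> t * \<beta> (n' t))\<^sup>2)"
    if "n' 0 = 0" "\<And>t. n' (Suc t) = n' t \<or> n' (Suc t) = Suc (n' t)"
      "\<And>t. k t \<le> n' t" "summable (\<lambda>t. (\<beta> (k t))\<^sup>2)" for \<omega> n' k
    using that sel_policy unfolding q_def
    by (intro step_size_conditions[OF \<open>0 < d\<close> _ _ \<beta>_pos \<beta>_not_summable \<beta>_antimono]) auto
  from step_choice have "AE \<omega> in Omega p P.
    \<not> summable (\<lambda>t. q \<omega> t * step t (n \<omega> t)) \<and> summable (\<lambda>t. (q \<omega> t * step t (n \<omega> t))\<^sup>2)"
  proof
    assume "step = (\<lambda>t n. \<beta> t)"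
    then show ?thesis
      using conditions[of id id] \<beta>_summable_sq by simp
  next
    assume step_count: "step = (\<lambda>t n. \<beta> n)"
    have "reachable p A P i"
      using A1 sel_policy by (intro reachable_if_visit_prob_pos) blast+
    then have "AE \<omega> in Omega p P. \<exists>k. (\<forall>t. k t \<le> n \<omega> t) \<and> summable (\<lambda>t. (\<beta> (k t))\<^sup>2)"
      unfolding n_def
      by (intro AE_alg_visit_count_lower_bound[OF finite A2 sel_policy]) (simp_all add: \<beta>_summable_sq)
    then show ?thesis
    proof (rule eventually_mono)
      fix \<omega> assume "\<exists>k. (\<forall>t. k t \<le> n \<omega> t) \<and> summable (\<lambda>t. (\<beta> (k t))\<^sup>2)"
      then show "\<not> summable (\<lambda>t. q \<omega> t * step t (n \<omega> t)) \<and> summable (\<lambda>t. (q \<omega> t * step t (n \<omega> t))\<^sup>2)"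
        using conditions[where \<omega>=\<omega> and n'="n \<omega>", OF n_counter] by (auto simp: step_count)
    qed
  qed
  then show ?thesis
    by (simp add: q_def n_def)
qed

theorem lemma4:
  fixes A :: "'s::finite \<Rightarrow> 'a set" and P :: "'s \<Rightarrow> 'a \<Rightarrow> 's pmf"
    and c :: "'s \<Rightarrow> 'a \<Rightarrow> real" and \<alpha> :: real and p :: "'s pmf"
    and \<beta> :: "nat \<Rightarrow> real" and T0 :: nat
    and sel :: "('s \<Rightarrow> real) \<Rightarrow> 's \<Rightarrow> 'a" and step :: "nat \<Rightarrow> nat \<Rightarrow> real"
  assumes alpha: "0 < \<alpha>" "\<alpha> < 1"
    and actions: "\<forall>s. finite (A s) \<and> A s \<noteq> {}"
    and costs: "\<forall>s. \<forall>u\<in>A s. 0 \<le> c s u"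
    and A1: "\<forall>mu. policy A mu \<longrightarrow> (\<forall>i. visit_prob p P mu i > 0)"
    and A2: "\<forall>i j. \<forall>u\<in>A i. \<forall>v\<in>A i. pmf (P i u) j > 0 \<longleftrightarrow> pmf (P i v) j > 0"
    and A3: "acyclic (reach_edges A P \<inter> (transient_states A P \<times> transient_states A P))"
    and greedy: "greedy_sel A c \<alpha> P sel"
    and beta_range: "\<forall>t. 0 < \<beta> t \<and> \<beta> t \<le> 1"
    and beta_div: "\<not> summable \<beta>"
    and beta_sq: "summable (\<lambda>t. (\<beta> t)\<^sup>2)"
    and beta_mono: "\<forall>t t'. T0 < t \<and> t \<le> t' \<longrightarrow> \<beta> t' \<le> \<beta> t"
    and step_choice: "step = (\<lambda>t n. \<beta> t) \<or> step = (\<lambda>t n. \<beta> n)"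
  shows "AE \<omega> in Omega p P. \<forall>i.
     \<not> summable (\<lambda>t. visit_prob p P (sel (fst (alg c \<alpha> sel step \<omega> t))) i
                        * step t (snd (alg c \<alpha> sel step \<omega> t) i))
   \<and> summable (\<lambda>t. (visit_prob p P (sel (fst (alg c \<alpha> sel step \<omega> t))) i
                        * step t (snd (alg c \<alpha> sel step \<omega> t) i))\<^sup>2)"
proof -
  have "AE \<omega> in Omega p P.
     \<not> summable (\<lambda>t. visit_prob p P (sel (fst (alg c \<alpha> sel step \<omega> t))) i
                        * step t (snd (alg c \<alpha> sel step \<omega> t) i))
   \<and> summable (\<lambda>t. (visit_prob p P (sel (fst (alg c \<alpha> sel step \<omega> t))) i
                        * step t (snd (alg c \<alpha> sel step \<omega> t) i))\<^sup>2)" for i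
  proof (rule AE_step_size_conditions_at[OF _ A1 A2 _ _ beta_div beta_sq _ step_choice])
    show "\<And>s. finite (A s)" "\<And>m. 0 < \<beta> m" "\<And>m m'. T0 < m \<Longrightarrow> m \<le> m' \<Longrightarrow> \<beta> m' \<le> \<beta> m"
      using actions beta_range beta_mono by blast+
    show "\<And>J. policy A (sel J)"
      using greedy unfolding greedy_sel_def policy_def by blast
  qed
  then show ?thesis
    by (simp add: AE_all_countable)
qed

end
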